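(* Let $n\ge1$, let $\mathcal{S}$ be a discrete subgroup of $O(n+1)$ satisfying the spanning property, and let $f$ be a measurable $\mathcal{S}$-invariant function with $c_1\le f\le c_2$ ($c_1,c_2>0$). Let $C(n,p,f,\mathcal{S})=\sup_{\Omega\in\mathcal{K}_0(\mathcal{S})}\mathcal{F}_p(\Omega)$ and $C(n,-\infty,\mathcal{S})=\sup_{\Omega\in\mathcal{K}_0(\mathcal{S})}\mathcal{F}_{-\infty}(\Omega)$. Then $C(n,p,f,\mathcal{S})\to C(n,-\infty,\mathcal{S})$ as $p\to-\infty$. Moreover, if $\Omega^{(p)}$ ($p<-n-1$) are maximizers of $V$ over $\mathcal{K}_p(\mathcal{S})$ and $\Omega^{(-\infty)}$ is a Hausdorff limit of $\Omega^{(p)}$ along a sequence $p\to-\infty$, then $\Omega^{(-\infty)}$ is a maximizer of $\mathcal{F}_{-\infty}$ on $\mathcal{K}_0(\mathcal{S})$.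
   Context: $\mathcal{K}_0(\mathcal{S})$: convex bodies in $\mathbb{R}^{n+1}$ containing the origin and invariant under $\mathcal{S}$; $h_\Omega$ support function; $V(\Omega)=(n+1)|\Omega|$; $\mathcal{F}_p(\Omega)=V(\Omega)\big(\int_{\mathbb{S}^n}fh_\Omega^p/\int_{\mathbb{S}^n}f\big)^{-(n+1)/p}$; $\mathcal{F}_{-\infty}(\Omega)=V(\Omega)/(\min_{\mathbb{S}^n}h_\Omega)^{n+1}$; $\mathcal{K}_p(\mathcal{S})=\{\Omega\in\mathcal{K}_0(\mathcal{S}):\int fh_\Omega^p=\int f\}$. Spanning property: for every $a\in\mathbb{S}^n$, $\mathrm{conv}\{\phi(a):\phi\in\mathcal{S}\}$ is a non-degenerate $(n+1)$-dimensional polytope. *)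

theory Defs
  imports "HOL-Analysis.Analysis"
begin

text \<open>Ambient space: R^(n+1) is modelled by a Euclidean space 'a with DIM('a) = n+1.
  The unit sphere S^n is sphere 0 1.\<close>

definition orth_subgroup :: "('a::euclidean_space \<Rightarrow> 'a) set \<Rightarrow> bool" where
  "orth_subgroup S \<longleftrightarrow>
     (\<forall>\<phi>\<in>S. orthogonal_transformation \<phi>) \<and> id \<in> S \<and>
     (\<forall>\<phi>\<in>S. \<forall>\<psi>\<in>S. \<phi> \<circ> \<psi> \<in> S) \<and> (\<forall>\<phi>\<in>S. inv \<phi> \<in> S)"

definition discrete_orth_subgroup :: "('a::euclidean_space \<Rightarrow> 'a) set \<Rightarrow> bool" where
  "discrete_orth_subgroup S \<longleftrightarrow> orth_subgroup S \<and>
     (\<forall>\<phi>\<in>S. \<exists>e>0. \<forall>\<psi>\<in>S. \<psi> \<noteq> \<phi> \<longrightarrow> onorm (\<lambda>x. \<psi> x - \<phi> x) \<ge> e)"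

definition spanning_property :: "('a::euclidean_space \<Rightarrow> 'a) set \<Rightarrow> bool" where
  "spanning_property S \<longleftrightarrow>
     (\<forall>a\<in>sphere 0 1. polytope (convex hull ((\<lambda>\<phi>. \<phi> a) ` S)) \<and>
        aff_dim (convex hull ((\<lambda>\<phi>. \<phi> a) ` S)) = int DIM('a))"

text \<open>Integral over the unit sphere with respect to the standard surface measure,
  expressed through the cone identity
  int_{S^n} g d sigma = (n+1) int_{B^{n+1}} g(x/|x|) dx.\<close>
definition sphere_int :: "('a::euclidean_space \<Rightarrow> real) \<Rightarrow> real" where
  "sphere_int g = real DIM('a) * (LINT x : ball 0 1 | lborel. g (x /\<^sub>R norm x))"

definition support_fun :: "'a::euclidean_space set \<Rightarrow> 'a \<Rightarrow> real" where
  "support_fun K u = (SUP x\<in>K. x \<bullet> u)"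

definition convex_body :: "'a::euclidean_space set \<Rightarrow> bool" where
  "convex_body K \<longleftrightarrow> compact K \<and> convex K \<and> interior K \<noteq> {}"

definition K0 :: "('a::euclidean_space \<Rightarrow> 'a) set \<Rightarrow> 'a set set" where
  "K0 S = {K. convex_body K \<and> 0 \<in> K \<and> (\<forall>\<phi>\<in>S. \<phi> ` K = K)}"

definition Vol :: "'a::euclidean_space set \<Rightarrow> real" where
  "Vol K = real DIM('a) * measure lebesgue K"

definition Fp :: "real \<Rightarrow> ('a::euclidean_space \<Rightarrow> real) \<Rightarrow> 'a set \<Rightarrow> real" where
  "Fp p f K = Vol K *
     (sphere_int (\<lambda>u. f u * support_fun K u powr p) / sphere_int f) powr (- real DIM('a) / p)"

definition Fminf :: "'a::euclidean_space set \<Rightarrow> real" where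
  "Fminf K = Vol K / (Inf (support_fun K ` sphere 0 1)) ^ DIM('a)"

definition Kp :: "real \<Rightarrow> ('a::euclidean_space \<Rightarrow> real) \<Rightarrow> ('a \<Rightarrow> 'a) set \<Rightarrow> 'a set set" where
  "Kp p f S = {K \<in> K0 S. sphere_int (\<lambda>u. f u * support_fun K u powr p) = sphere_int f}"

definition hausdorff_dist :: "'a::euclidean_space set \<Rightarrow> 'a set \<Rightarrow> real" where
  "hausdorff_dist A B = max (SUP a\<in>A. infdist a B) (SUP b\<in>B. infdist b A)"

end

theory Submission
  imports Defs
begin

(* Every K in K_0(S) has a positive support function on the sphere. The orbit of a unit vector a
   is finite (its points are extreme points of the polytope it spans) and sums to 0 (the sum is
   S-fixed, and by the spanning property no unit vector is), so h_K(a) <= 0 would make K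
   orthogonal to an orbit spanning the whole space. For such K and p < 0 the normalised moment
   (int f h_K^p) / (int f) lies between delta (min h_K + e)^p and (min h_K)^p, hence
   F_p(K) <= F_{-inf}(K) and F_p(K) tends to F_{-inf}(K); this gives convergence of the suprema.

   For the maximizers, rescaling K in K_0(S) into K_p(S) gives
   F_p(K) <= V(Omega_p) = F_p(Omega_p) <= F_{-inf}(Omega_p). Under Hausdorff convergence the volume
   is upper semicontinuous and min h drops by at most the Hausdorff distance, which yields
   F_{-inf}(K) <= F_{-inf}(Omega_{-inf}). The limit lies in K_0(S): it is convex, S-invariant,
   contains 0, and its volume is at least that of the unit ball, which belongs to every K_p(S). *)

section \<open>Support functions\<close>

lemma inner_le_support_fun:
  fixes K :: "'a::euclidean_space set"
  assumes "compact K" "x \<in> K"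
  shows "x \<bullet> u \<le> support_fun K u"
proof -
  have "compact ((\<lambda>x. x \<bullet> u) ` K)"
    using assms(1) by (intro compact_continuous_image continuous_intros)
  then have "bdd_above ((\<lambda>x. x \<bullet> u) ` K)"
    by (intro bounded_imp_bdd_above compact_imp_bounded)
  with assms(2) show ?thesis
    unfolding support_fun_def by (rule cSUP_upper)
qed

lemma support_fun_attained:
  fixes K :: "'a::euclidean_space set"
  assumes "compact K" "K \<noteq> {}"
  obtains x where "x \<in> K" "support_fun K u = x \<bullet> u"
proof -
  have "continuous_on K (\<lambda>x. x \<bullet> u)" by (intro continuous_intros)
  then obtain x where x: "x \<in> K" "\<And>y. y \<in> K \<Longrightarrow> y \<bullet> u \<le> x \<bullet> u"
    using continuous_attains_sup[OF assms] by blast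
  then have "support_fun K u = x \<bullet> u"
    unfolding support_fun_def by (intro cSup_eq_maximum) auto
  with x(1) show ?thesis by (rule that)
qed

lemma support_fun_nonneg:
  fixes K :: "'a::euclidean_space set"
  assumes "compact K" "0 \<in> K"
  shows "support_fun K u \<ge> 0"
  using inner_le_support_fun[OF assms] by simp

lemma support_fun_lipschitz:
  fixes K :: "'a::euclidean_space set"
  assumes "compact K" "K \<noteq> {}"
  obtains R where "R-lipschitz_on UNIV (support_fun K)"
proof -
  obtain R where R: "\<And>x. x \<in> K \<Longrightarrow> norm x \<le> R"
    using compact_imp_bounded[OF assms(1)] bounded_iff by blast
  have "R \<ge> 0" using R assms(2) by (meson all_not_in_conv norm_ge_zero order_trans)
  have le: "support_fun K u \<le> support_fun K v + R * dist u v" for u v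
  proof -
    obtain x where x: "x \<in> K" "support_fun K u = x \<bullet> u"
      using support_fun_attained[OF assms] .
    have "x \<bullet> u = x \<bullet> v + x \<bullet> (u - v)" by (simp add: inner_diff_right)
    also have "x \<bullet> (u - v) \<le> norm x * norm (u - v)" by (rule norm_cauchy_schwarz)
    also have "\<dots> \<le> R * dist u v" using R[OF x(1)] by (simp add: dist_norm mult_right_mono)
    finally show ?thesis using x inner_le_support_fun[OF assms(1) x(1), of v] by linarith
  qed
  have "R-lipschitz_on UNIV (support_fun K)"
  proof (rule lipschitz_onI)
    show "dist (support_fun K u) (support_fun K v) \<le> R * dist u v" for u v
      using le[of u v] le[of v u] by (simp add: dist_real_def dist_commute)
  qed fact
  then show ?thesis by (rule that)
qed

lemma continuous_on_support_fun:
  fixes K :: "'a::euclidean_space set"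
  assumes "compact K" "K \<noteq> {}"
  shows "continuous_on A (support_fun K)"
  using support_fun_lipschitz[OF assms]
  by (metis continuous_on_subset lipschitz_on_continuous_on top_greatest)

lemma support_fun_scaleR:
  fixes K :: "'a::euclidean_space set"
  assumes "compact K" "K \<noteq> {}" "t > 0"
  shows "support_fun ((\<lambda>x. t *\<^sub>R x) ` K) u = t * support_fun K u"
proof -
  have tK: "compact ((\<lambda>x. t *\<^sub>R x) ` K)" using assms(1) by (rule compact_scaling)
  obtain x where x: "x \<in> K" "support_fun K u = x \<bullet> u"
    using support_fun_attained[OF assms(1,2)] .
  obtain y where y: "y \<in> (\<lambda>x. t *\<^sub>R x) ` K" "support_fun ((\<lambda>x. t *\<^sub>R x) ` K) u = y \<bullet> u"
    using support_fun_attained[OF tK] assms(2) by blast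
  have "y \<bullet> u \<le> t * support_fun K u"
    using y(1) inner_le_support_fun[OF assms(1)] assms(3) by (auto intro: mult_left_mono)
  moreover have "t * support_fun K u \<le> support_fun ((\<lambda>x. t *\<^sub>R x) ` K) u"
    using inner_le_support_fun[OF tK, of "t *\<^sub>R x" u] x by auto
  ultimately show ?thesis using y(2) by linarith
qed

lemma support_fun_unit_cball:
  fixes u :: "'a::euclidean_space"
  assumes "u \<in> sphere 0 1"
  shows "support_fun (cball 0 1) u = 1"
  unfolding support_fun_def
proof (rule cSup_eq_maximum)
  show "1 \<in> (\<lambda>x. x \<bullet> u) ` cball 0 1"
    using assms by (intro image_eqI[of _ _ u]) (auto simp: dot_square_norm)
  show "y \<le> 1" if y: "y \<in> (\<lambda>x. x \<bullet> u) ` cball 0 1" for y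
  proof -
    obtain x where "x \<in> cball 0 1" "y = x \<bullet> u" using y by blast
    then show ?thesis
      using assms norm_cauchy_schwarz[of x u] by (simp add: order_trans)
  qed
qed

definition min_support :: "'a::euclidean_space set \<Rightarrow> real" where
  "min_support K = Inf (support_fun K ` sphere 0 1)"

lemma Fminf_eq: "Fminf K = Vol K / min_support K ^ DIM('a)"
  for K :: "'a::euclidean_space set"
  unfolding Fminf_def min_support_def ..

lemma min_support_attained:
  fixes K :: "'a::euclidean_space set"
  assumes "compact K" "K \<noteq> {}"
  obtains u where "u \<in> sphere 0 1" "support_fun K u = min_support K"
    and "\<And>v. v \<in> sphere 0 1 \<Longrightarrow> min_support K \<le> support_fun K v"
proof -
  have "sphere (0::'a) 1 \<noteq> {}" by simp
  then obtain u where u: "u \<in> sphere 0 1" "\<And>v. v \<in> sphere 0 1 \<Longrightarrow> support_fun K u \<le> support_fun K v"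
    using continuous_attains_inf[OF compact_sphere _ continuous_on_support_fun[OF assms]] by blast
  then have "min_support K = support_fun K u"
    unfolding min_support_def by (intro cInf_eq_minimum) auto
  with u show ?thesis using that by simp
qed

lemma min_support_le:
  fixes K :: "'a::euclidean_space set"
  assumes "compact K" "K \<noteq> {}" "u \<in> sphere 0 1"
  shows "min_support K \<le> support_fun K u"
  using min_support_attained[OF assms(1,2)] assms(3) by metis

section \<open>Symmetric convex bodies\<close>

lemma orth_subgroupD:
  assumes "orth_subgroup S" "\<phi> \<in> S"
  shows "orthogonal_transformation \<phi>" "inv \<phi> \<in> S" "\<phi> (inv \<phi> x) = x"
proof -
  show ot: "orthogonal_transformation \<phi>" "inv \<phi> \<in> S"
    using assms unfolding orth_subgroup_def by auto
  show "\<phi> (inv \<phi> x) = x"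
    using orthogonal_transformation_surj[OF ot(1)] by (rule surj_f_inv_f)
qed

lemma orth_subgroup_image_eq:
  assumes "orth_subgroup S" "\<phi> \<in> S" "\<And>\<psi>. \<psi> \<in> S \<Longrightarrow> \<psi> ` X \<subseteq> X"
  shows "\<phi> ` X = X"
proof
  show "X \<subseteq> \<phi> ` X"
  proof
    fix x assume "x \<in> X"
    then have "inv \<phi> x \<in> X" using assms(3)[OF orth_subgroupD(2)[OF assms(1,2)]] by blast
    then show "x \<in> \<phi> ` X" using orth_subgroupD(3)[OF assms(1,2)] by (metis image_eqI)
  qed
qed (use assms(2,3) in blast)

lemma orth_subgroup_image_cball:
  assumes "orth_subgroup S" "\<phi> \<in> S"
  shows "\<phi> ` cball 0 r = cball (0::'a::euclidean_space) r"
proof (rule orth_subgroup_image_eq[OF assms])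
  fix \<psi> assume "\<psi> \<in> S"
  then show "\<psi> ` cball 0 r \<subseteq> cball 0 r"
    using orthogonal_transformation_norm[OF orth_subgroupD(1)[OF assms(1)]] by auto
qed

lemma unit_cball_in_K0:
  assumes "orth_subgroup S"
  shows "cball (0::'a::euclidean_space) 1 \<in> K0 S"
  unfolding K0_def convex_body_def using orth_subgroup_image_cball[OF assms] by simp

lemma K0D:
  assumes "K \<in> K0 S"
  shows "compact K" "K \<noteq> {}" "0 \<in> K" "convex K" "interior K \<noteq> {}" "\<And>\<phi>. \<phi> \<in> S \<Longrightarrow> \<phi> ` K = K"
  using assms unfolding K0_def convex_body_def by auto

abbreviation orbit :: "('a \<Rightarrow> 'a) set \<Rightarrow> 'a \<Rightarrow> 'a set" where
  "orbit S a \<equiv> (\<lambda>\<phi>. \<phi> a) ` S"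

lemma finite_orbit:
  fixes S :: "('a::euclidean_space \<Rightarrow> 'a) set"
  assumes S: "orth_subgroup S" "spanning_property S" and a: "a \<in> sphere 0 1"
  shows "finite (orbit S a)"
proof -
  let ?O = "orbit S a"
  have "polytope (convex hull ?O)"
    using S(2) a unfolding spanning_property_def by blast
  then obtain T where T: "finite T" "convex hull ?O = convex hull T"
    unfolding polytope_def by blast
  have O_sphere: "?O \<subseteq> sphere 0 1"
    using a orthogonal_transformation_norm[OF orth_subgroupD(1)[OF S(1)]] by auto
  then have hull_cball: "convex hull ?O \<subseteq> cball 0 1"
    using O_sphere sphere_cball by (intro hull_minimal[where S = convex] convex_cball) blast
  have "w extreme_point_of (convex hull ?O)" if w: "w \<in> ?O" for w
    unfolding extreme_point_of_def
  proof (intro conjI ballI)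
    show "w \<in> convex hull ?O" using w by (rule hull_inc)
    fix x y assume "x \<in> convex hull ?O" "y \<in> convex hull ?O"
    then have "norm x \<le> 1" "norm y \<le> 1" using hull_cball mem_cball_0 by blast+
    moreover have "norm w = 1" using w O_sphere by auto
    moreover have "norm w < norm x \<or> norm w < norm y" if "w \<in> open_segment x y"
      using dist_decreases_open_segment[OF that, of 0] by simp
    ultimately show "w \<notin> open_segment x y" by linarith
  qed
  then have "?O \<subseteq> T"
    unfolding T(2) using extreme_point_of_convex_hull by blast
  then show ?thesis using T(1) by (rule finite_subset)
qed

lemma orbit_image_eq:
  assumes "orth_subgroup S" "\<phi> \<in> S"
  shows "\<phi> ` orbit S a = orbit S a"
proof (rule orth_subgroup_image_eq[OF assms])
  fix \<psi> assume "\<psi> \<in> S"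
  then have "\<psi> \<circ> \<rho> \<in> S" if "\<rho> \<in> S" for \<rho>
    using assms(1) that unfolding orth_subgroup_def by blast
  then show "\<psi> ` orbit S a \<subseteq> orbit S a"
    by (auto intro!: image_eqI[where x = "\<psi> \<circ> _"])
qed

(* The orbit sum is fixed by S, and by the spanning property no unit vector is fixed by S. *)
lemma orbit_sum_eq_0:
  fixes S :: "('a::euclidean_space \<Rightarrow> 'a) set"
  assumes S: "orth_subgroup S" "spanning_property S" and a: "a \<in> sphere 0 1"
  shows "(\<Sum>w\<in>orbit S a. w) = 0"
proof (rule ccontr)
  define s where "s = (\<Sum>w\<in>orbit S a. w)"
  assume "s \<noteq> 0"
  define b where "b = s /\<^sub>R norm s"
  have b: "b \<in> sphere 0 1" using \<open>s \<noteq> 0\<close> by (simp add: b_def)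
  have "\<phi> b = b" if \<phi>: "\<phi> \<in> S" for \<phi>
  proof -
    have lin: "linear \<phi>"
      using orthogonal_transformation_linear[OF orth_subgroupD(1)[OF S(1) \<phi>]] .
    have "\<phi> s = (\<Sum>w\<in>\<phi> ` orbit S a. w)"
      unfolding s_def linear_sum[OF lin]
      using orthogonal_transformation_inj[OF orth_subgroupD(1)[OF S(1) \<phi>]]
      by (simp add: sum.reindex inj_on_subset)
    then have "\<phi> s = s" unfolding orbit_image_eq[OF S(1) \<phi>] s_def .
    then show ?thesis by (simp add: b_def linear_scale[OF lin])
  qed
  moreover have "id \<in> S" using S(1) unfolding orth_subgroup_def by blast
  ultimately have "orbit S b = {b}"
    by (auto intro: rev_image_eqI[of id])
  then have "aff_dim (convex hull (orbit S b)) = 0" by simp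
  then show False
    using S(2) b unfolding spanning_property_def by simp
qed

lemma orbit_orthogonal_if_support_fun_nonpos:
  fixes S :: "('a::euclidean_space \<Rightarrow> 'a) set"
  assumes S: "orth_subgroup S" "spanning_property S"
    and K: "K \<in> K0 S" and a: "a \<in> sphere 0 1" "support_fun K a \<le> 0"
    and w: "w \<in> orbit S a" and y: "y \<in> K"
  shows "w \<bullet> y = 0"
proof -
  have nonpos: "v \<bullet> y \<le> 0" if v: "v \<in> orbit S a" for v
  proof -
    obtain \<psi> where \<psi>: "\<psi> \<in> S" "v = \<psi> a" using v by blast
    have "inv \<psi> y \<in> K"
      using K0D(6)[OF K orth_subgroupD(2)[OF S(1) \<psi>(1)]] y by blast
    then have "a \<bullet> inv \<psi> y \<le> 0"
      using inner_le_support_fun[OF K0D(1)[OF K], of "inv \<psi> y" a] a(2) by (simp add: inner_commute)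
    moreover have "v \<bullet> y = a \<bullet> inv \<psi> y"
      using orth_subgroupD(1)[OF S(1) \<psi>(1)] orth_subgroupD(3)[OF S(1) \<psi>(1), of y] \<psi>(2)
      unfolding orthogonal_transformation_def by metis
    ultimately show ?thesis by simp
  qed
  have "(\<Sum>v\<in>orbit S a. v \<bullet> y) = 0"
    using orbit_sum_eq_0[OF S a(1)] by (simp add: inner_sum_left[symmetric])
  then have "\<forall>v\<in>orbit S a. - (v \<bullet> y) = 0"
    using sum_nonneg_eq_0_iff[OF finite_orbit[OF S a(1)], of "\<lambda>v. - (v \<bullet> y)"] nonpos
    by (simp add: sum_negf)
  with w show ?thesis by (metis neg_equal_0_iff_equal)
qed

lemma support_fun_pos:
  fixes S :: "('a::euclidean_space \<Rightarrow> 'a) set"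
  assumes S: "orth_subgroup S" "spanning_property S"
    and K: "K \<in> K0 S" and a: "a \<in> sphere 0 1"
  shows "support_fun K a > 0"
proof (rule ccontr)
  assume "\<not> support_fun K a > 0"
  have "affine hull (orbit S a) = UNIV"
    using S(2) a aff_dim_eq_full unfolding spanning_property_def
    by (metis aff_dim_convex_hull)
  have "K \<subseteq> {0}"
  proof
    fix y assume y: "y \<in> K"
    have "affine {x. x \<bullet> y = 0}"
      by (rule subspace_imp_affine) (auto simp: subspace_def inner_add_left)
    moreover have "orbit S a \<subseteq> {x. x \<bullet> y = 0}"
      using orbit_orthogonal_if_support_fun_nonpos[OF S K a _ _ y] \<open>\<not> support_fun K a > 0\<close>
      by auto
    ultimately have "affine hull (orbit S a) \<subseteq> {x. x \<bullet> y = 0}" by (rule hull_minimal[rotated])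
    then have "y \<bullet> y = 0" using \<open>affine hull (orbit S a) = UNIV\<close> by blast
    then show "y \<in> {0}" by simp
  qed
  then show False using K0D(5)[OF K] interior_mono interior_singleton by blast
qed

lemma min_support_pos:
  fixes S :: "('a::euclidean_space \<Rightarrow> 'a) set"
  assumes "orth_subgroup S" "spanning_property S" "K \<in> K0 S"
  shows "min_support K > 0"
  using min_support_attained[OF K0D(1,2)[OF assms(3)]] support_fun_pos[OF assms] by metis

lemma Vol_scaleR:
  fixes K :: "'a::euclidean_space set"
  assumes "t > 0"
  shows "Vol ((\<lambda>x. t *\<^sub>R x) ` K) = t ^ DIM('a) * Vol K"
  unfolding Vol_def using measure_lebesgue_affine[of t 0 K] assms by simp

lemma K0_scaleR:
  assumes S: "orth_subgroup S" and K: "K \<in> K0 S" and "t > 0"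
  shows "(\<lambda>x. t *\<^sub>R x) ` K \<in> K0 S"
  unfolding K0_def convex_body_def
proof (intro CollectI conjI ballI)
  show "compact ((\<lambda>x. t *\<^sub>R x) ` K)" using K0D(1)[OF K] by (rule compact_scaling)
  show "convex ((\<lambda>x. t *\<^sub>R x) ` K)" using K0D(4)[OF K] by (rule convex_scaling)
  show "0 \<in> (\<lambda>x. t *\<^sub>R x) ` K" using K0D(3)[OF K] by (metis image_eqI scaleR_zero_right)
  have "(\<lambda>x. t *\<^sub>R x) ` interior K \<subseteq> interior ((\<lambda>x. t *\<^sub>R x) ` K)"
    using \<open>t > 0\<close> interior_subset by (intro interior_maximal open_scaling) auto
  then show "interior ((\<lambda>x. t *\<^sub>R x) ` K) \<noteq> {}" using K0D(5)[OF K] by blast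
  fix \<phi> assume "\<phi> \<in> S"
  then have "linear \<phi>" using S by (intro orthogonal_transformation_linear orth_subgroupD(1))
  then have "\<phi> ` (\<lambda>x. t *\<^sub>R x) ` K = (\<lambda>x. t *\<^sub>R x) ` \<phi> ` K"
    unfolding image_image by (simp add: linear_scale)
  then show "\<phi> ` (\<lambda>x. t *\<^sub>R x) ` K = (\<lambda>x. t *\<^sub>R x) ` K" using K0D(6)[OF K \<open>\<phi> \<in> S\<close>] by simp
qed

section \<open>Integrals over the sphere\<close>

lemma integral_lborel_cong_off_point:
  fixes F H :: "'a::euclidean_space \<Rightarrow> real"
  assumes "\<And>x. x \<noteq> c \<Longrightarrow> F x = H x"
  shows "integral\<^sup>L lborel F = integral\<^sup>L lborel H"
proof -
  define d where "d x = indicator {c} x * (H c - F c)" for x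
  have d: "integrable lborel d" "integral\<^sup>L lborel d = 0"
    unfolding d_def by auto
  have H: "H = (\<lambda>x. F x + d x)" and F: "F = (\<lambda>x. H x - d x)"
    using assms by (auto simp: d_def indicator_def)
  show ?thesis
  proof (cases "integrable lborel F")
    case True
    then show ?thesis using d by (simp add: H)
  next
    case False
    then have "\<not> integrable lborel H" using d(1) F by (metis Bochner_Integration.integrable_diff)
    with False show ?thesis by (simp add: not_integrable_integral_eq)
  qed
qed

(* At the origin the integrand is the junk value g 0, as 0 is not on the sphere; removing the
   origin makes the measurability of g on the sphere usable. *)
lemma sphere_int_punctured_ball:
  fixes g :: "'a::euclidean_space \<Rightarrow> real"
  shows "sphere_int g = real DIM('a) * (LINT x : ball 0 1 - {0} | lborel. g (x /\<^sub>R norm x))"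
  unfolding sphere_int_def set_lebesgue_integral_def
  by (subst integral_lborel_cong_off_point[where c = 0]) (auto simp: indicator_def)

lemma sphere_int_cmult: "sphere_int (\<lambda>u. c * g u) = c * sphere_int g"
  unfolding sphere_int_def by simp

lemma sphere_int_cong:
  fixes g h :: "'a::euclidean_space \<Rightarrow> real"
  assumes "\<And>u. u \<in> sphere 0 1 \<Longrightarrow> g u = h u"
  shows "sphere_int g = sphere_int h"
  unfolding sphere_int_punctured_ball using assms
  by (subst set_lebesgue_integral_cong) auto

lemma set_integrable_radial:
  fixes g :: "'a::euclidean_space \<Rightarrow> real"
  assumes g: "g \<in> borel_measurable (restrict_space borel (sphere 0 1))"
    and bound: "\<And>u. u \<in> sphere 0 1 \<Longrightarrow> \<bar>g u\<bar> \<le> B"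
  shows "set_integrable lborel (ball 0 1 - {0}) (\<lambda>x. g (x /\<^sub>R norm x))"
proof (rule set_integrable_bound)
  have "emeasure lborel (ball (0::'a) 1 - {0}) < \<infinity>"
    by (intro emeasure_bounded_finite) (meson bounded_ball bounded_subset Diff_subset)
  then show "set_integrable lborel (ball (0::'a) 1 - {0}) (\<lambda>_. B)"
    unfolding set_integrable_def by (intro integrable_scaleR_left integrable_real_indicator) auto
  have "continuous_on (ball 0 1 - {0}) (\<lambda>x::'a. x /\<^sub>R norm x)"
    by (intro continuous_intros) auto
  then have "(\<lambda>x::'a. x /\<^sub>R norm x) \<in> borel_measurable (restrict_space lborel (ball 0 1 - {0}))"
    by (subst measurable_cong_sets[OF sets_restrict_space_cong[OF sets_lborel] refl])
       (rule borel_measurable_continuous_on_restrict)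
  then have "(\<lambda>x::'a. x /\<^sub>R norm x)
      \<in> restrict_space lborel (ball 0 1 - {0}) \<rightarrow>\<^sub>M restrict_space borel (sphere 0 1)"
    by (intro measurable_restrict_space2) (auto simp: space_restrict_space)
  from measurable_compose[OF this g]
  show "set_borel_measurable lborel (ball 0 1 - {0}) (\<lambda>x. g (x /\<^sub>R norm x))"
    unfolding set_borel_measurable_def
    by (subst borel_measurable_restrict_space_iff[symmetric]) (auto simp: comp_def)
  show "AE x in lborel. x \<in> ball 0 1 - {0} \<longrightarrow> norm (g (x /\<^sub>R norm x)) \<le> norm B"
    using bound by (intro AE_I2) (auto intro: order_trans[OF _ abs_ge_self])
qed

lemma sphere_int_mono:
  fixes g h :: "'a::euclidean_space \<Rightarrow> real"
  assumes "g \<in> borel_measurable (restrict_space borel (sphere 0 1))"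
    and "\<And>u. u \<in> sphere 0 1 \<Longrightarrow> \<bar>g u\<bar> \<le> B"
    and "h \<in> borel_measurable (restrict_space borel (sphere 0 1))" "\<And>u. u \<in> sphere 0 1 \<Longrightarrow> \<bar>h u\<bar> \<le> C"
    and "\<And>u. u \<in> sphere 0 1 \<Longrightarrow> g u \<le> h u"
  shows "sphere_int g \<le> sphere_int h"
  unfolding sphere_int_punctured_ball
  using assms by (intro mult_left_mono set_integral_mono set_integrable_radial) auto

lemma measure_lborel_open_pos:
  fixes U :: "'a::euclidean_space set"
  assumes "open U" "bounded U" "x \<in> U"
  shows "measure lborel U > 0"
proof -
  obtain e where e: "e > 0" "ball x e \<subseteq> U" using open_contains_ball assms(1,3) by blast
  have "U \<in> fmeasurable lborel"
    using assms(1) emeasure_bounded_finite[OF assms(2)] by (auto simp: fmeasurable_def)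
  then have "measure lborel (ball x e) \<le> measure lborel U"
    using e(2) by (intro measure_mono_fmeasurable) auto
  with content_ball_pos[OF e(1), of x] show ?thesis by linarith
qed

lemma set_integral_ge_measure:
  fixes g :: "'a::euclidean_space \<Rightarrow> real"
  assumes U: "U \<subseteq> A" "U \<in> fmeasurable lborel" and g: "set_integrable lborel A g"
    and "\<And>x. x \<in> A - U \<Longrightarrow> 0 \<le> g x" "\<And>x. x \<in> U \<Longrightarrow> c \<le> g x"
  shows "c * measure lborel U \<le> (LINT x : A | lborel. g x)"
proof -
  have indicator_U: "indicator A x *\<^sub>R (c * indicator U x) = c * indicator U x" for x
    using U(1) by (auto simp: indicator_def)
  have "integrable lborel (\<lambda>x. c * indicator U x)"
    using U(2) by (intro integrable_mult_right integrable_real_indicator)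
      (auto simp: fmeasurable_def)
  then have "set_integrable lborel A (\<lambda>x. c * indicator U x)"
    by (simp only: set_integrable_def indicator_U)
  then have "(LINT x : A | lborel. c * indicator U x) \<le> (LINT x : A | lborel. g x)"
    using g assms(4,5) by (intro set_integral_mono) (auto simp: indicator_def)
  also have "(LINT x : A | lborel. c * indicator U x) = c * measure lborel U"
    unfolding set_lebesgue_integral_def indicator_U by simp
  finally show ?thesis .
qed

(* \<nu> is n+1 times the volume of the cone over the cap {u. h u < r}. *)
lemma sphere_int_ge_cap:
  fixes h :: "'a::euclidean_space \<Rightarrow> real"
  assumes h: "continuous_on (sphere 0 1) h" and u0: "u0 \<in> sphere 0 1" "h u0 < r"
  obtains \<nu> where "\<nu> > 0"
    and "\<And>g c B. g \<in> borel_measurable (restrict_space borel (sphere 0 1)) \<Longrightarrow>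
            (\<And>u. u \<in> sphere 0 1 \<Longrightarrow> 0 \<le> g u \<and> g u \<le> B) \<Longrightarrow>
            (\<And>u. u \<in> sphere 0 1 \<Longrightarrow> h u < r \<Longrightarrow> c \<le> g u) \<Longrightarrow> c * \<nu> \<le> sphere_int g"
proof
  define U where "U = (ball 0 1 - {0}) \<inter> (\<lambda>x. h (x /\<^sub>R norm x)) -` {..<r}"
  have U_sub: "U \<subseteq> ball 0 1 - {0}" unfolding U_def by blast
  have "continuous_on (ball 0 1 - {0}) (\<lambda>x::'a. h (x /\<^sub>R norm x))"
  proof (rule continuous_on_compose2[OF h])
    show "continuous_on (ball 0 1 - {0}) (\<lambda>x::'a. x /\<^sub>R norm x)"
      by (intro continuous_intros) auto
  qed (simp add: image_subset_iff)
  then have "open U"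
    unfolding U_def by (rule continuous_open_preimage) (auto simp: open_Diff)
  moreover have "bounded U"
    using U_sub by (meson bounded_ball bounded_subset Diff_subset order_trans)
  moreover have "(1/2) *\<^sub>R u0 \<in> U" using u0 by (auto simp: U_def)
  ultimately have "measure lborel U > 0" by (rule measure_lborel_open_pos)
  then show "real DIM('a) * measure lborel U > 0" by simp
  fix g :: "'a \<Rightarrow> real" and c B
  assume g: "g \<in> borel_measurable (restrict_space borel (sphere 0 1))"
    and g_bounds: "\<And>u. u \<in> sphere 0 1 \<Longrightarrow> 0 \<le> g u \<and> g u \<le> B"
    and g_cap: "\<And>u. u \<in> sphere 0 1 \<Longrightarrow> h u < r \<Longrightarrow> c \<le> g u"
  have "U \<in> fmeasurable lborel"
    using \<open>open U\<close> emeasure_bounded_finite[OF \<open>bounded U\<close>] by (auto simp: fmeasurable_def)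
  then have "c * measure lborel U \<le> (LINT x : ball 0 1 - {0} | lborel. g (x /\<^sub>R norm x))"
    using g_bounds g_cap
    by (intro set_integral_ge_measure[OF U_sub] set_integrable_radial[OF g, of B])
      (auto simp: U_def)
  then show "c * (real DIM('a) * measure lborel U) \<le> sphere_int g"
    unfolding sphere_int_punctured_ball using mult_left_mono[of _ _ "real DIM('a)"]
    by (simp add: mult.left_commute)
qed

lemma sphere_int_pos:
  fixes g :: "'a::euclidean_space \<Rightarrow> real"
  assumes "g \<in> borel_measurable (restrict_space borel (sphere 0 1))"
    and "c > 0" "\<And>u. u \<in> sphere 0 1 \<Longrightarrow> c \<le> g u \<and> g u \<le> B"
  shows "sphere_int g > 0"
proof -
  have "sphere (0::'a) 1 \<noteq> {}" by simp
  then obtain u0 :: 'a where u0: "u0 \<in> sphere 0 1" by blast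
  show ?thesis
  proof (rule sphere_int_ge_cap[of "\<lambda>_. 0" u0 1])
    fix \<nu> :: real
    assume "\<nu> > 0"
      and cap: "\<And>g c B. g \<in> borel_measurable (restrict_space borel (sphere (0::'a) 1)) \<Longrightarrow>
      (\<And>u. u \<in> sphere 0 1 \<Longrightarrow> 0 \<le> g u \<and> g u \<le> B) \<Longrightarrow>
      (\<And>u. u \<in> sphere 0 1 \<Longrightarrow> (0::real) < 1 \<Longrightarrow> c \<le> g u) \<Longrightarrow> c * \<nu> \<le> sphere_int g"
    have "c * \<nu> \<le> sphere_int g"
      using assms by (intro cap[where B = B]) (fastforce dest: assms(3))+
    with mult_pos_pos[OF \<open>c > 0\<close> \<open>\<nu> > 0\<close>] show ?thesis by linarith
  qed (use u0 in auto)
qed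

section \<open>Hausdorff limits\<close>

lemma infdist_le_hausdorff_dist:
  fixes A B :: "'a::euclidean_space set"
  assumes "compact A" "compact B"
  shows "x \<in> A \<Longrightarrow> infdist x B \<le> hausdorff_dist A B"
    and "y \<in> B \<Longrightarrow> infdist y A \<le> hausdorff_dist A B"
proof -
  have "compact ((\<lambda>a. infdist a B) ` A)" "compact ((\<lambda>b. infdist b A) ` B)"
    using assms by (auto intro!: compact_continuous_image continuous_on_infdist continuous_on_id)
  then have "bdd_above ((\<lambda>a. infdist a B) ` A)" "bdd_above ((\<lambda>b. infdist b A) ` B)"
    by (auto intro: bounded_imp_bdd_above compact_imp_bounded)
  then show "x \<in> A \<Longrightarrow> infdist x B \<le> hausdorff_dist A B"
    and "y \<in> B \<Longrightarrow> infdist y A \<le> hausdorff_dist A B"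
    unfolding hausdorff_dist_def by (auto intro: max.coboundedI1 max.coboundedI2 cSUP_upper2)
qed

lemma measure_infdist_le_tendsto:
  fixes L :: "'a::euclidean_space set"
  assumes "compact L" "L \<noteq> {}"
  shows "(\<lambda>j. measure lebesgue {x. infdist x L \<le> 1 / real (Suc j)}) \<longlonglongrightarrow> measure lebesgue L"
proof -
  define N where "N j = {x. infdist x L \<le> 1 / real (Suc j)}" for j
  have N: "N j \<in> lmeasurable" for j
    unfolding N_def by (intro lmeasurable_compact compact_infdist_le assms) simp
  have "(\<Inter>j. N j) = L"
  proof (intro equalityI subsetI)
    fix x assume "x \<in> (\<Inter>j. N j)"
    then have "infdist x L \<le> 1 / real (Suc j)" for j by (auto simp: N_def)
    then have "infdist x L \<le> 0"
      using LIMSEQ_inverse_real_of_nat by (intro tendsto_lowerbound) (auto simp: inverse_eq_divide)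
    then show "x \<in> L"
      using in_closed_iff_infdist_zero[OF compact_imp_closed assms(2)] assms(1)
        infdist_nonneg[of x L] by simp
  qed (auto simp: N_def)
  moreover have "(\<lambda>j. measure lebesgue (N j)) \<longlonglongrightarrow> measure lebesgue (\<Inter>j. N j)"
  proof (rule Lim_measure_decseq)
    show "range N \<subseteq> sets lebesgue" "\<And>j. emeasure lebesgue (N j) \<noteq> \<infinity>"
      using fmeasurableD[OF N] fmeasurableD2[OF N] by auto
    show "decseq N"
      unfolding N_def by (intro decseq_SucI) (auto intro: order_trans[OF _ frac_le])
  qed
  ultimately show ?thesis unfolding N_def by simp
qed

locale hausdorff_convergent =
  fixes A :: "nat \<Rightarrow> 'a::euclidean_space set" and L :: "'a set"
  assumes compact_seq: "\<And>k. compact (A k)" and nonempty_seq: "\<And>k. A k \<noteq> {}"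
    and compact_limit: "compact L" and nonempty_limit: "L \<noteq> {}"
    and hausdorff_tendsto: "(\<lambda>k. hausdorff_dist (A k) L) \<longlonglongrightarrow> 0"
begin

lemma limit_mem:
  assumes "\<And>k. z k \<in> A k" "z \<longlonglongrightarrow> x"
  shows "x \<in> L"
proof -
  have "infdist x L \<le> dist x (z k) + hausdorff_dist (A k) L" for k
    using infdist_triangle[of x L "z k"]
      infdist_le_hausdorff_dist(1)[OF compact_seq compact_limit assms(1)[of k]]
    by linarith
  moreover have "(\<lambda>k. dist x (z k) + hausdorff_dist (A k) L) \<longlonglongrightarrow> dist x x + 0"
    by (intro tendsto_add tendsto_dist tendsto_const assms(2) hausdorff_tendsto)
  ultimately have "infdist x L \<le> 0"
    by (intro tendsto_lowerbound[OF _ always_eventually]) auto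
  then show ?thesis
    using in_closed_iff_infdist_zero[OF compact_imp_closed[OF compact_limit] nonempty_limit]
      infdist_nonneg[of x L] by simp
qed

lemma approximating_sequence:
  assumes "x \<in> L"
  obtains z where "\<And>k. z k \<in> A k" "z \<longlonglongrightarrow> x"
proof -
  have "\<exists>y \<in> A k. dist x y \<le> hausdorff_dist (A k) L" for k
  proof -
    obtain y where "y \<in> A k" "infdist x (A k) = dist x y"
      using infdist_attains_inf[OF compact_imp_closed[OF compact_seq] nonempty_seq] by blast
    then show ?thesis
      using infdist_le_hausdorff_dist(2)[OF compact_seq[of k] compact_limit assms] by auto
  qed
  then obtain z where z: "\<And>k. z k \<in> A k" "\<And>k. dist x (z k) \<le> hausdorff_dist (A k) L"
    by metis
  have "(\<lambda>k. dist (z k) x) \<longlonglongrightarrow> 0"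
    using z(2) by (intro tendsto_sandwich[OF _ _ tendsto_const hausdorff_tendsto])
      (auto simp: dist_commute)
  with z(1) show ?thesis using that tendsto_dist_iff by blast
qed

lemma convex_limit:
  assumes "\<And>k. convex (A k)"
  shows "convex L"
proof (rule convexI)
  fix x y u v assume xy: "x \<in> L" "y \<in> L" and uv: "0 \<le> u" "0 \<le> v" "u + v = (1::real)"
  obtain xk where "\<And>k. xk k \<in> A k" "xk \<longlonglongrightarrow> x" using approximating_sequence[OF xy(1)] by blast
  moreover obtain yk where "\<And>k. yk k \<in> A k" "yk \<longlonglongrightarrow> y" using approximating_sequence[OF xy(2)] by blast
  ultimately show "u *\<^sub>R x + v *\<^sub>R y \<in> L"
    using assms uv by (intro limit_mem[of "\<lambda>k. u *\<^sub>R xk k + v *\<^sub>R yk k"] tendsto_intros convexD)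
qed

lemma linear_image_limit_subset:
  assumes "linear \<phi>" "\<And>k. \<phi> ` A k \<subseteq> A k"
  shows "\<phi> ` L \<subseteq> L"
proof
  fix y assume "y \<in> \<phi> ` L"
  then obtain x where "x \<in> L" "y = \<phi> x" by blast
  obtain z where "\<And>k. z k \<in> A k" "z \<longlonglongrightarrow> x" using approximating_sequence[OF \<open>x \<in> L\<close>] by blast
  then show "y \<in> L"
    using assms linear_continuous_at[OF linear_conv_bounded_linear[THEN iffD1, OF assms(1)]]
    unfolding \<open>y = \<phi> x\<close>
    by (intro limit_mem[of "\<lambda>k. \<phi> (z k)"] isCont_tendsto_compose[of x \<phi>]) auto
qed

lemma measure_limsup:
  assumes "e > 0"
  shows "eventually (\<lambda>k. measure lebesgue (A k) \<le> measure lebesgue L + e) sequentially"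
proof -
  define N where "N j = {x. infdist x L \<le> 1 / real (Suc j)}" for j
  have "eventually (\<lambda>j. measure lebesgue (N j) < measure lebesgue L + e) sequentially"
    using order_tendstoD(2)[OF measure_infdist_le_tendsto[OF compact_limit nonempty_limit],
        of "measure lebesgue L + e"] \<open>e > 0\<close>
    unfolding N_def by simp
  then obtain j where j: "measure lebesgue (N j) < measure lebesgue L + e"
    unfolding eventually_sequentially by blast
  have "eventually (\<lambda>k. hausdorff_dist (A k) L < 1 / real (Suc j)) sequentially"
    using hausdorff_tendsto by (intro order_tendstoD(2)) auto
  then show ?thesis
  proof (rule eventually_mono)
    fix k assume "hausdorff_dist (A k) L < 1 / real (Suc j)"
    then have "A k \<subseteq> N j"
      using infdist_le_hausdorff_dist(1)[OF compact_seq compact_limit] by (force simp: N_def)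
    moreover have "N j \<in> lmeasurable"
      unfolding N_def
      by (intro lmeasurable_compact compact_infdist_le nonempty_limit compact_limit) simp
    ultimately have "measure lebesgue (A k) \<le> measure lebesgue (N j)"
      by (intro measure_mono_fmeasurable fmeasurableD[OF lmeasurable_compact[OF compact_seq]])
    with j show "measure lebesgue (A k) \<le> measure lebesgue L + e" by linarith
  qed
qed

lemma min_support_limit_le:
  "min_support L - hausdorff_dist (A k) L \<le> min_support (A k)"
proof -
  obtain u where u: "u \<in> sphere 0 1" "support_fun (A k) u = min_support (A k)"
    using min_support_attained[OF compact_seq nonempty_seq] by blast
  obtain y where y: "y \<in> L" "support_fun L u = y \<bullet> u"
    using support_fun_attained[OF compact_limit nonempty_limit] .
  obtain z where z: "z \<in> A k" "dist y z = infdist y (A k)"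
    using infdist_attains_inf[OF compact_imp_closed[OF compact_seq] nonempty_seq] by metis
  have "(y - z) \<bullet> u \<le> dist y z"
    using norm_cauchy_schwarz[of "y - z" u] u(1) by (simp add: dist_norm)
  moreover have "dist y z \<le> hausdorff_dist (A k) L"
    using z(2) infdist_le_hausdorff_dist(2)[OF compact_seq compact_limit y(1)] by simp
  moreover have "z \<bullet> u \<le> support_fun (A k) u"
    using inner_le_support_fun[OF compact_seq z(1)] .
  moreover have "min_support L \<le> support_fun L u"
    using min_support_le[OF compact_limit nonempty_limit u(1)] .
  ultimately show ?thesis using u(2) y(2) by (simp add: inner_diff_left)
qed

end

lemma measure_pos_iff_interior_nonempty:
  fixes K :: "'a::euclidean_space set"
  assumes "compact K" "convex K"
  shows "measure lebesgue K > 0 \<longleftrightarrow> interior K \<noteq> {}"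
  using negligible_iff_measure0[OF lmeasurable_compact[OF assms(1)]]
    negligible_convex_interior[OF assms(2)] measure_nonneg[of lebesgue K]
  by linarith

section \<open>Moments of the support function\<close>

definition support_moment :: "('a::euclidean_space \<Rightarrow> real) \<Rightarrow> 'a set \<Rightarrow> real \<Rightarrow> real" where
  "support_moment f K p = sphere_int (\<lambda>u. f u * support_fun K u powr p) / sphere_int f"

lemma Fp_eq_support_moment:
  "Fp p f K = Vol K * support_moment f K p powr (- real DIM('a) / p)"
  for K :: "'a::euclidean_space set"
  unfolding Fp_def support_moment_def ..

locale sphere_density =
  fixes f :: "'a::euclidean_space \<Rightarrow> real" and c1 c2 :: real
  assumes f_measurable: "f \<in> borel_measurable (restrict_space borel (sphere 0 1))"
    and c1_pos: "c1 > 0"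
    and f_bounds: "\<And>u. u \<in> sphere 0 1 \<Longrightarrow> c1 \<le> f u \<and> f u \<le> c2"
begin

lemma sphere_int_f_pos: "sphere_int f > 0"
  using f_measurable c1_pos f_bounds by (rule sphere_int_pos)

lemma weighted_support_measurable:
  assumes "compact K" "K \<noteq> {}"
  shows "(\<lambda>u. f u * support_fun K u powr p)
    \<in> borel_measurable (restrict_space borel (sphere (0::'a) 1))"
  using f_measurable borel_measurable_continuous_on_restrict[OF continuous_on_support_fun[OF assms]]
  by (intro borel_measurable_times powr_real_measurable) auto

lemma weighted_support_bounds:
  assumes "compact K" "K \<noteq> {}" "min_support K > 0" "p \<le> 0" "u \<in> sphere 0 1"
  shows "0 \<le> f u * support_fun K u powr p"
    and "f u * support_fun K u powr p \<le> min_support K powr p * f u"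
    and "f u * support_fun K u powr p \<le> c2 * min_support K powr p"
proof -
  have f: "c1 \<le> f u" "f u \<le> c2" using f_bounds[OF assms(5)] by auto
  have h: "support_fun K u powr p \<le> min_support K powr p"
    using min_support_le[OF assms(1,2,5)] by (rule powr_mono2'[OF assms(4,3)])
  show "0 \<le> f u * support_fun K u powr p" using f c1_pos by simp
  show "f u * support_fun K u powr p \<le> min_support K powr p * f u"
    using mult_left_mono[OF h, of "f u"] f c1_pos by (simp add: mult.commute)
  show "f u * support_fun K u powr p \<le> c2 * min_support K powr p"
    using f c1_pos h by (intro mult_mono) auto
qed

lemma support_moment_le:
  assumes "compact K" "K \<noteq> {}" "min_support K > 0" "p \<le> 0"
  shows "support_moment f K p \<le> min_support K powr p"
proof -
  have "sphere_int (\<lambda>u. f u * support_fun K u powr p) \<le> sphere_int (\<lambda>u. min_support K powr p * f u)"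
  proof (rule sphere_int_mono)
    show "\<bar>f u * support_fun K u powr p\<bar> \<le> c2 * min_support K powr p" if "u \<in> sphere 0 1" for u
      using weighted_support_bounds[OF assms that] by simp
    show "\<bar>min_support K powr p * f u\<bar> \<le> min_support K powr p * c2" if "u \<in> sphere 0 1" for u
      using f_bounds[OF that] c1_pos by (auto intro: mult_left_mono)
  qed (use weighted_support_measurable[OF assms(1,2)] f_measurable weighted_support_bounds[OF assms]
      in auto)
  then show ?thesis
    unfolding support_moment_def sphere_int_cmult using sphere_int_f_pos
    by (simp add: divide_le_eq)
qed

lemma support_moment_lower:
  assumes K: "compact K" "K \<noteq> {}" "min_support K > 0" and "e > 0"
  obtains \<delta> where "\<delta> > 0" "\<And>p. p < 0 \<Longrightarrow> \<delta> * (min_support K + e) powr p \<le> support_moment f K p"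
proof -
  obtain u0 where u0: "u0 \<in> sphere 0 1" "support_fun K u0 = min_support K"
    using min_support_attained[OF K(1,2)] by blast
  obtain \<nu> where "\<nu> > 0"
    and cap: "\<And>g c B. g \<in> borel_measurable (restrict_space borel (sphere 0 1)) \<Longrightarrow>
      (\<And>u. u \<in> sphere 0 1 \<Longrightarrow> 0 \<le> g u \<and> g u \<le> B) \<Longrightarrow>
      (\<And>u. u \<in> sphere 0 1 \<Longrightarrow> support_fun K u < min_support K + e \<Longrightarrow> c \<le> g u) \<Longrightarrow>
      c * \<nu> \<le> sphere_int g"
    by (rule sphere_int_ge_cap[OF continuous_on_support_fun[OF K(1,2)] u0(1)])
      (use u0(2) \<open>e > 0\<close> in auto)
  show ?thesis
  proof
    show "c1 * \<nu> / sphere_int f > 0" using c1_pos \<open>\<nu> > 0\<close> sphere_int_f_pos by simp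
    fix p :: real assume "p < 0"
    have "c1 * (min_support K + e) powr p * \<nu> \<le> sphere_int (\<lambda>u. f u * support_fun K u powr p)"
    proof (rule cap[OF weighted_support_measurable[OF K(1,2)]])
      show "0 \<le> f u * support_fun K u powr p \<and>
          f u * support_fun K u powr p \<le> c2 * min_support K powr p"
        if "u \<in> sphere 0 1" for u
        using weighted_support_bounds[OF K _ that] \<open>p < 0\<close> by simp
      fix u assume u: "u \<in> sphere 0 1" "support_fun K u < min_support K + e"
      have "(min_support K + e) powr p \<le> support_fun K u powr p"
        using u(2) min_support_le[OF K(1,2) u(1)] K(3) \<open>p < 0\<close>
        by (intro powr_mono2') auto
      then show "c1 * (min_support K + e) powr p \<le> f u * support_fun K u powr p"
        using f_bounds[OF u(1)] c1_pos by (intro mult_mono) auto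
    qed
    then have "c1 * (min_support K + e) powr p * \<nu> / sphere_int f \<le> support_moment f K p"
      unfolding support_moment_def using sphere_int_f_pos by (intro divide_right_mono) auto
    then show "c1 * \<nu> / sphere_int f * (min_support K + e) powr p \<le> support_moment f K p"
      by (simp add: ac_simps)
  qed
qed

lemma support_moment_pos:
  assumes "compact K" "K \<noteq> {}" "min_support K > 0" "p < 0"
  shows "support_moment f K p > 0"
proof -
  obtain \<delta> where "\<delta> > 0" and \<delta>: "\<And>p. p < 0 \<Longrightarrow> \<delta> * (min_support K + 1) powr p \<le> support_moment f K p"
    using support_moment_lower[OF assms(1-3) zero_less_one] by blast
  have "\<delta> * (min_support K + 1) powr p > 0" using \<open>\<delta> > 0\<close> assms(3) by simp
  with \<delta>[OF assms(4)] show ?thesis by linarith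
qed

lemma Fp_le_Fminf:
  assumes K: "compact K" "K \<noteq> {}" "min_support K > 0" and "p < 0"
  shows "Fp p f K \<le> Fminf K"
proof -
  define D where "D = real DIM('a)"
  have "- D / p \<ge> 0" using \<open>p < 0\<close> by (simp add: D_def divide_nonneg_neg)
  then have "support_moment f K p powr (- D / p) \<le> (min_support K powr p) powr (- D / p)"
    using support_moment_le[OF K] support_moment_pos[OF K \<open>p < 0\<close>] \<open>p < 0\<close>
    by (intro powr_mono2) auto
  also have "\<dots> = min_support K powr (- D)"
    using \<open>p < 0\<close> by (simp add: powr_powr)
  also have "\<dots> = 1 / min_support K ^ DIM('a)"
    using K(3) by (simp add: powr_minus_divide D_def powr_realpow)
  finally have "Vol K * support_moment f K p powr (- D / p) \<le> Vol K * (1 / min_support K ^ DIM('a))"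
    by (rule mult_left_mono) (simp add: Vol_def)
  then show ?thesis
    unfolding Fp_eq_support_moment Fminf_eq D_def by simp
qed

lemma Fp_lower_bound:
  assumes K: "compact K" "K \<noteq> {}" "min_support K > 0" and "e > 0"
  obtains \<delta> where "\<delta> > 0"
    "\<And>p. p < 0 \<Longrightarrow>
       Vol K * (min_support K + e) powr (- real DIM('a)) * \<delta> powr (- real DIM('a) / p) \<le> Fp p f K"
proof -
  define D where "D = real DIM('a)"
  obtain \<delta> where "\<delta> > 0" and \<delta>: "\<And>p. p < 0 \<Longrightarrow> \<delta> * (min_support K + e) powr p \<le> support_moment f K p"
    using support_moment_lower[OF K \<open>e > 0\<close>] by blast
  show ?thesis
  proof (rule that[OF \<open>\<delta> > 0\<close>])
    fix p :: real assume "p < 0"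
    have "- D / p \<ge> 0" using \<open>p < 0\<close> by (simp add: D_def divide_nonneg_neg)
    have "(min_support K + e) powr (- D) * \<delta> powr (- D / p)
        = (\<delta> * (min_support K + e) powr p) powr (- D / p)"
      using \<open>p < 0\<close> \<open>\<delta> > 0\<close> K(3) \<open>e > 0\<close> by (simp add: powr_mult powr_powr)
    also have "\<dots> \<le> support_moment f K p powr (- D / p)"
      using \<delta>[OF \<open>p < 0\<close>] \<open>- D / p \<ge> 0\<close> \<open>\<delta> > 0\<close> K(3) \<open>e > 0\<close> by (intro powr_mono2) auto
    finally have "Vol K * ((min_support K + e) powr (- D) * \<delta> powr (- D / p))
        \<le> Vol K * support_moment f K p powr (- D / p)"
      by (rule mult_left_mono) (simp add: Vol_def)
    then show "Vol K * (min_support K + e) powr (- real DIM('a)) * \<delta> powr (- real DIM('a) / p)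
        \<le> Fp p f K"
      unfolding Fp_eq_support_moment D_def by (simp add: mult.assoc)
  qed
qed

lemma Fp_tendsto_Fminf:
  assumes K: "compact K" "K \<noteq> {}" "min_support K > 0"
  shows "((\<lambda>p. Fp p f K) \<longlongrightarrow> Fminf K) at_bot"
proof (rule order_tendstoI)
  fix y assume "y > Fminf K"
  show "eventually (\<lambda>p. Fp p f K < y) at_bot"
    using eventually_gt_at_bot[of "0::real"]
    by (rule eventually_mono) (use Fp_le_Fminf[OF K] \<open>y > Fminf K\<close> in fastforce)
next
  fix y assume "y < Fminf K"
  define D where "D = real DIM('a)"
  define L where "L e = Vol K * (min_support K + e) powr (- D)" for e
  have "(L \<longlongrightarrow> L 0) (at_right 0)"
    unfolding L_def using K(3) by (intro tendsto_intros) auto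
  moreover have "L 0 = Fminf K"
    using K(3) by (simp add: L_def Fminf_eq powr_minus_divide D_def powr_realpow)
  ultimately have "eventually (\<lambda>e. y < L e) (at_right 0)"
    using \<open>y < Fminf K\<close> by (simp add: order_tendstoD(1))
  then obtain e where "e > 0" "y < L e"
    by (metis eventually_at_right_field dense)
  obtain \<delta> where "\<delta> > 0" and \<delta>: "\<And>p. p < 0 \<Longrightarrow> L e * \<delta> powr (- D / p) \<le> Fp p f K"
    using Fp_lower_bound[OF K \<open>e > 0\<close>] unfolding L_def D_def by blast
  have "((\<lambda>p::real. - D / p) \<longlongrightarrow> 0) at_bot"
    by (intro tendsto_divide_0[OF tendsto_const]
        filterlim_mono[OF filterlim_ident order_refl at_bot_le_at_infinity])
  then have "((\<lambda>p. L e * \<delta> powr (- D / p)) \<longlongrightarrow> L e * \<delta> powr 0) at_bot"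
    using \<open>\<delta> > 0\<close> by (intro tendsto_intros) auto
  then have "eventually (\<lambda>p. y < L e * \<delta> powr (- D / p)) at_bot"
    using \<open>\<delta> > 0\<close> \<open>y < L e\<close> by (intro order_tendstoD(1)) auto
  then show "eventually (\<lambda>p. y < Fp p f K) at_bot"
    using eventually_gt_at_bot[of 0] by eventually_elim (use \<delta> in fastforce)
qed

lemma SUP_Fp_tendsto_SUP_Fminf:
  assumes S: "orth_subgroup S" "spanning_property S"
  shows "((\<lambda>p. SUP K\<in>K0 S. ereal (Fp p f K)) \<longlongrightarrow> (SUP K\<in>K0 S. ereal (Fminf K))) at_bot"
proof (rule order_tendstoI)
  fix y assume "y < (SUP K\<in>K0 S. ereal (Fminf K))"
  then obtain K where K: "K \<in> K0 S" "y < ereal (Fminf K)" by (auto simp: less_SUP_iff)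
  have "((\<lambda>p. ereal (Fp p f K)) \<longlongrightarrow> ereal (Fminf K)) at_bot"
    using Fp_tendsto_Fminf[OF K0D(1,2)[OF K(1)] min_support_pos[OF S K(1)]] by (rule tendsto_ereal)
  then have "eventually (\<lambda>p. y < ereal (Fp p f K)) at_bot"
    using K(2) by (rule order_tendstoD(1))
  then show "eventually (\<lambda>p. y < (SUP K\<in>K0 S. ereal (Fp p f K))) at_bot"
    by eventually_elim (use K(1) in \<open>auto simp: less_SUP_iff\<close>)
next
  fix y assume y: "y > (SUP K\<in>K0 S. ereal (Fminf K))"
  have le: "(SUP K\<in>K0 S. ereal (Fp p f K)) \<le> (SUP K\<in>K0 S. ereal (Fminf K))" if "p < 0" for p
    using Fp_le_Fminf[OF K0D(1,2) min_support_pos[OF S] that] by (intro SUP_mono) auto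
  show "eventually (\<lambda>p. (SUP K\<in>K0 S. ereal (Fp p f K)) < y) at_bot"
    using eventually_gt_at_bot[of "0::real"]
    by (rule eventually_mono) (use le y in \<open>auto intro: le_less_trans\<close>)
qed

lemma Kp_iff: "K \<in> Kp p f S \<longleftrightarrow> K \<in> K0 S \<and> support_moment f K p = 1"
  unfolding Kp_def support_moment_def using sphere_int_f_pos by auto

lemma Fp_eq_Vol_if_Kp:
  assumes "K \<in> Kp p f S"
  shows "Fp p f K = Vol K"
  using assms unfolding Kp_iff Fp_eq_support_moment by simp

lemma unit_cball_in_Kp:
  assumes "orth_subgroup S"
  shows "cball 0 1 \<in> Kp p f S"
proof -
  have "sphere_int (\<lambda>u. f u * support_fun (cball 0 1) u powr p) = sphere_int f"
    by (rule sphere_int_cong) (simp add: support_fun_unit_cball)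
  then show ?thesis
    unfolding Kp_iff support_moment_def using unit_cball_in_K0[OF assms] sphere_int_f_pos by simp
qed

lemma support_moment_scaleR:
  assumes "compact K" "0 \<in> K" "t > 0"
  shows "support_moment f ((\<lambda>x. t *\<^sub>R x) ` K) p = t powr p * support_moment f K p"
proof -
  have "K \<noteq> {}" using assms(2) by blast
  have scale: "f u * support_fun ((\<lambda>x. t *\<^sub>R x) ` K) u powr p
      = t powr p * (f u * support_fun K u powr p)"
    for u
    unfolding support_fun_scaleR[OF assms(1) \<open>K \<noteq> {}\<close> assms(3)]
    using support_fun_nonneg[OF assms(1,2)] assms(3) by (simp add: powr_mult)
  have "sphere_int (\<lambda>u. f u * support_fun ((\<lambda>x. t *\<^sub>R x) ` K) u powr p)
      = t powr p * sphere_int (\<lambda>u. f u * support_fun K u powr p)"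
    unfolding scale by (rule sphere_int_cmult)
  then show ?thesis
    unfolding support_moment_def by simp
qed

lemma Fp_le_Kp_Vol_bound:
  assumes S: "orth_subgroup S" "spanning_property S" and K: "K \<in> K0 S" and "p < 0"
    and bound: "\<And>K'. K' \<in> Kp p f S \<Longrightarrow> Vol K' \<le> V"
  shows "Fp p f K \<le> V"
proof -
  define M where "M = support_moment f K p"
  have "M > 0"
    unfolding M_def using K0D(1,2)[OF K] min_support_pos[OF S K] \<open>p < 0\<close>
    by (rule support_moment_pos)
  define t where "t = M powr (- 1 / p)"
  have "t > 0" using \<open>M > 0\<close> by (simp add: t_def)
  have "t powr p = M powr ((- 1 / p) * p)" unfolding t_def by (rule powr_powr)
  also have "(- 1 / p) * p = - 1" using \<open>p < 0\<close> by simp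
  finally have "t powr p = 1 / M" using \<open>M > 0\<close> by (simp add: powr_minus_divide)
  then have "(\<lambda>x. t *\<^sub>R x) ` K \<in> Kp p f S"
    unfolding Kp_iff support_moment_scaleR[OF K0D(1,3)[OF K] \<open>t > 0\<close>] M_def[symmetric]
    using K0_scaleR[OF S(1) K \<open>t > 0\<close>] \<open>M > 0\<close> by simp
  then have "Vol ((\<lambda>x. t *\<^sub>R x) ` K) \<le> V" by (rule bound)
  moreover have "t ^ DIM('a) = M powr (- real DIM('a) / p)"
  proof -
    have "t ^ DIM('a) = t powr real DIM('a)" using \<open>t > 0\<close> by (simp add: powr_realpow)
    also have "\<dots> = M powr ((- 1 / p) * real DIM('a))" unfolding t_def by (rule powr_powr)
    finally show ?thesis by simp
  qed
  ultimately show ?thesis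
    unfolding Fp_eq_support_moment Vol_scaleR[OF \<open>t > 0\<close>] M_def by (simp add: mult.commute)
qed

lemma Vol_le_Fminf_if_Kp:
  assumes S: "orth_subgroup S" "spanning_property S" and K: "K \<in> Kp p f S" and "p < 0"
  shows "Vol K \<le> Fminf K"
proof -
  have "K \<in> K0 S" using K by (simp add: Kp_iff)
  with K show ?thesis
    using Fp_le_Fminf[OF K0D(1,2) min_support_pos[OF S] \<open>p < 0\<close>] Fp_eq_Vol_if_Kp by metis
qed

lemma limit_of_maximizers_in_K0:
  assumes S: "orth_subgroup S"
    and max: "\<And>k K. K \<in> Kp (p k) f S \<Longrightarrow> Vol K \<le> Vol (\<Omega> k)"
    and \<Omega>: "\<And>k. \<Omega> k \<in> Kp (p k) f S" and lim: "hausdorff_convergent \<Omega> L"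
  shows "L \<in> K0 S"
proof -
  interpret hausdorff_convergent \<Omega> L by (fact lim)
  have \<Omega>_K0: "\<Omega> k \<in> K0 S" for k using \<Omega> by (simp add: Kp_iff)
  have "convex L" using K0D(4)[OF \<Omega>_K0] by (rule convex_limit)
  have "0 \<in> L" using K0D(3)[OF \<Omega>_K0] by (intro limit_mem[of "\<lambda>_. 0"]) auto
  have "\<phi> ` L = L" if "\<phi> \<in> S" for \<phi>
  proof (rule orth_subgroup_image_eq[OF S that])
    fix \<psi> assume "\<psi> \<in> S"
    then show "\<psi> ` L \<subseteq> L"
      using K0D(6)[OF \<Omega>_K0] S
      by (intro linear_image_limit_subset orthogonal_transformation_linear orth_subgroupD(1)) auto
  qed
  have "measure lebesgue (cball (0::'a) 1) \<le> measure lebesgue (\<Omega> k)" for k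
    using max[OF unit_cball_in_Kp[OF S]] by (simp add: Vol_def)
  then have "measure lebesgue (cball (0::'a) 1) \<le> measure lebesgue L + e" if "e > 0" for e
    using eventually_happens[OF measure_limsup[OF that]] by (auto intro: order_trans)
  then have "measure lebesgue (cball (0::'a) 1) \<le> measure lebesgue L"
    by (rule field_le_epsilon)
  moreover have "measure lebesgue (cball (0::'a) 1) > 0"
    by (simp add: measure_pos_iff_interior_nonempty)
  ultimately have "interior L \<noteq> {}"
    using measure_pos_iff_interior_nonempty[OF compact_limit \<open>convex L\<close>] by linarith
  then show ?thesis
    unfolding K0_def convex_body_def
    using compact_limit \<open>convex L\<close> \<open>0 \<in> L\<close> \<open>\<And>\<phi>. \<phi> \<in> S \<Longrightarrow> \<phi> ` L = L\<close> by blast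
qed

lemma Fminf_le_limit_volume_plus:
  assumes S: "orth_subgroup S" "spanning_property S"
    and p: "\<And>k. p k < 0" "filterlim p at_bot sequentially"
    and max: "\<And>k K. K \<in> Kp (p k) f S \<Longrightarrow> Vol K \<le> Vol (\<Omega> k)"
    and \<Omega>: "\<And>k. \<Omega> k \<in> Kp (p k) f S" and lim: "hausdorff_convergent \<Omega> L"
    and K: "K \<in> K0 S"
    and "\<eta> > 0"
  shows "Fminf K \<le> real DIM('a) * (measure lebesgue L + \<eta>) / min_support L ^ DIM('a)"
proof -
  interpret hausdorff_convergent \<Omega> L by (fact lim)
  define D where "D = real DIM('a)"
  define m where "m = min_support L"
  have "m > 0"
    unfolding m_def using S limit_of_maximizers_in_K0[OF S(1) max \<Omega> lim] by (rule min_support_pos)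
  have "((\<lambda>k. Fp (p k) f K) \<longlongrightarrow> Fminf K) sequentially"
    using Fp_tendsto_Fminf[OF K0D(1,2)[OF K] min_support_pos[OF S K]] p(2)
    by (rule filterlim_compose)
  show ?thesis
    unfolding D_def[symmetric] m_def[symmetric]
  proof (rule tendsto_le[OF trivial_limit_sequentially _ \<open>(\<lambda>k. Fp (p k) f K) \<longlonglongrightarrow> Fminf K\<close>])
    have "(\<lambda>k. m - hausdorff_dist (\<Omega> k) L) \<longlonglongrightarrow> m"
      using tendsto_diff[OF tendsto_const hausdorff_tendsto, of m] by simp
    then show "(\<lambda>k. D * (measure lebesgue L + \<eta>) / (m - hausdorff_dist (\<Omega> k) L) ^ DIM('a))
        \<longlonglongrightarrow> D * (measure lebesgue L + \<eta>) / m ^ DIM('a)"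
      using \<open>m > 0\<close> by (intro tendsto_divide tendsto_const tendsto_power) auto
    show "eventually (\<lambda>k. Fp (p k) f K
        \<le> D * (measure lebesgue L + \<eta>) / (m - hausdorff_dist (\<Omega> k) L) ^ DIM('a)) sequentially"
      using order_tendstoD(2)[OF hausdorff_tendsto \<open>m > 0\<close>] measure_limsup[OF \<open>\<eta> > 0\<close>]
    proof eventually_elim
      case (elim k)
      have "Fp (p k) f K \<le> Vol (\<Omega> k)" using Fp_le_Kp_Vol_bound[OF S K p(1) max] .
      also have "\<dots> \<le> Fminf (\<Omega> k)" using Vol_le_Fminf_if_Kp[OF S \<Omega> p(1)] .
      also have "\<dots> = Vol (\<Omega> k) / min_support (\<Omega> k) ^ DIM('a)" by (rule Fminf_eq)
      also have "\<dots> \<le> D * (measure lebesgue L + \<eta>) / (m - hausdorff_dist (\<Omega> k) L) ^ DIM('a)"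
        using elim min_support_limit_le[of k] measure_nonneg[of lebesgue L] \<open>\<eta> > 0\<close>
        by (intro frac_le power_mono) (auto simp: Vol_def D_def m_def)
      finally show ?case .
    qed
  qed
qed

lemma Fminf_le_limit_of_maximizers:
  assumes S: "orth_subgroup S" "spanning_property S"
    and p: "\<And>k. p k < 0" "filterlim p at_bot sequentially"
    and max: "\<And>k K. K \<in> Kp (p k) f S \<Longrightarrow> Vol K \<le> Vol (\<Omega> k)"
    and \<Omega>: "\<And>k. \<Omega> k \<in> Kp (p k) f S" and lim: "hausdorff_convergent \<Omega> L"
    and K: "K \<in> K0 S"
  shows "Fminf K \<le> Fminf L"
proof -
  define D where "D = real DIM('a)"
  define m where "m = min_support L"
  have "m > 0"
    unfolding m_def using S limit_of_maximizers_in_K0[OF S(1) max \<Omega> lim] by (rule min_support_pos)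
  have "((\<lambda>\<eta>. D * (measure lebesgue L + \<eta>) / m ^ DIM('a))
      \<longlongrightarrow> D * (measure lebesgue L + 0) / m ^ DIM('a)) (at_right 0)"
    by (intro tendsto_intros) (use \<open>m > 0\<close> in auto)
  moreover have "eventually (\<lambda>\<eta>. Fminf K \<le> D * (measure lebesgue L + \<eta>) / m ^ DIM('a)) (at_right 0)"
    using eventually_at_right_less
    by (rule eventually_mono) (use Fminf_le_limit_volume_plus[OF assms] in \<open>simp add: D_def m_def\<close>)
  ultimately have "Fminf K \<le> D * (measure lebesgue L + 0) / m ^ DIM('a)"
    by (intro tendsto_lowerbound) auto
  then show ?thesis unfolding Fminf_eq Vol_def D_def m_def by simp
qed

end

theorem lemma4p1:
  fixes S :: "('a::euclidean_space \<Rightarrow> 'a) set"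
    and f :: "'a \<Rightarrow> real" and c1 c2 :: real
  assumes dim: "DIM('a) \<ge> 2"
    and disc: "discrete_orth_subgroup S"
    and span: "spanning_property S"
    and meas: "f \<in> borel_measurable (restrict_space borel (sphere 0 1))"
    and inv: "\<And>\<phi> u. \<phi> \<in> S \<Longrightarrow> u \<in> sphere 0 1 \<Longrightarrow> f (\<phi> u) = f u"
    and c1: "c1 > 0" and c2: "c2 > 0"
    and bnd: "\<And>u. u \<in> sphere 0 1 \<Longrightarrow> c1 \<le> f u \<and> f u \<le> c2"
  shows "((\<lambda>p. SUP K\<in>K0 S. ereal (Fp p f K)) \<longlongrightarrow> (SUP K\<in>K0 S. ereal (Fminf K))) at_bot
     \<and> (\<forall>(pk :: nat \<Rightarrow> real) (\<Omega> :: nat \<Rightarrow> 'a set) \<Omega>inf.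
          (\<forall>k. pk k < - real DIM('a)) \<and> filterlim pk at_bot sequentially \<and>
          (\<forall>k. \<Omega> k \<in> Kp (pk k) f S \<and> (\<forall>K\<in>Kp (pk k) f S. Vol K \<le> Vol (\<Omega> k))) \<and>
          compact \<Omega>inf \<and> \<Omega>inf \<noteq> {} \<and>
          (\<lambda>k. hausdorff_dist (\<Omega> k) \<Omega>inf) \<longlonglongrightarrow> 0
          \<longrightarrow> \<Omega>inf \<in> K0 S \<and> (\<forall>K\<in>K0 S. Fminf K \<le> Fminf \<Omega>inf))"
proof -
  have S: "orth_subgroup S" using disc unfolding discrete_orth_subgroup_def by blast
  interpret sphere_density f c1 c2 using meas c1 bnd by unfold_locales
  have "\<Omega>inf \<in> K0 S \<and> (\<forall>K\<in>K0 S. Fminf K \<le> Fminf \<Omega>inf)"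
    if p: "\<forall>k. pk k < - real DIM('a)" "filterlim pk at_bot sequentially"
      and \<Omega>: "\<forall>k. \<Omega> k \<in> Kp (pk k) f S \<and> (\<forall>K\<in>Kp (pk k) f S. Vol K \<le> Vol (\<Omega> k))"
      and L: "compact \<Omega>inf" "\<Omega>inf \<noteq> {}" "(\<lambda>k. hausdorff_dist (\<Omega> k) \<Omega>inf) \<longlonglongrightarrow> 0"
    for pk \<Omega> \<Omega>inf
  proof -
    have \<Omega>_Kp: "\<And>k. \<Omega> k \<in> Kp (pk k) f S"
      and max: "\<And>k K. K \<in> Kp (pk k) f S \<Longrightarrow> Vol K \<le> Vol (\<Omega> k)"
      using \<Omega> by auto
    have \<Omega>_K0: "\<Omega> k \<in> K0 S" for k using \<Omega>_Kp by (simp add: Kp_iff)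
    have lim: "hausdorff_convergent \<Omega> \<Omega>inf"
      by unfold_locales (use L K0D(1,2)[OF \<Omega>_K0] in auto)
    have "pk k < 0" for k using p(1) by (smt (verit) of_nat_0_le_iff)
    then show ?thesis
      using limit_of_maximizers_in_K0[OF S max \<Omega>_Kp lim]
        Fminf_le_limit_of_maximizers[OF S span _ p(2) max \<Omega>_Kp lim] by blast
  qed
  then show ?thesis using SUP_Fp_tendsto_SUP_Fminf[OF S span] by blast
qed

end
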